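(* Let $F\colon S^2\to S^2$ be a Thurston map of degree $d$ with $k=\#\operatorname{post}(F)\ge3$ postcritical points, and let $\mathcal{C}\supset\operatorname{post}(F)$ be an oriented Jordan curve. Let $\gamma^0=E_0,\dots,E_{k-1}$ be the $0$-edges, positively oriented and listed in their cyclic order along $\mathcal{C}$. Let $\gamma^1=E'_0,\dots,E'_{kd-1}$ be any Eulerian circuit in the graph of $1$-edges. Then $F\colon\gamma^1\to\gamma^0$ is a $d$-fold cover if and only if every $1$-edge is positively oriented in $\gamma^1$ (i.e. traversed by $\gamma^1$ in its positive orientation).
   Context: A Thurston map is an orientation-preserving, postcritically finite branched covering of $S^2$. The postcritical points divide $\mathcal{C}$ into $k$ closed arcs, the $0$-edges; a $0$-edge is positively oriented if its orientation agrees with that of $\mathcal{C}$. The $1$-vertices are the points of $F^{-1}(\operatorname{post}(F))$; a $1$-edge is the closure of a component of $F^{-1}(\mathcal{C})\setminus F^{-1}(\operatorname{post}(F))$; there are $kd$ of them and $F$ maps each $1$-edge homeomorphically onto a $0$-edge. An oriented $1$-edge $E$ is positively oriented if $F$ maps its initial/terminal point to the initial/terminal point of the positively oriented $0$-edge $F(E)$. An Eulerian circuit in the graph of $1$-edges is a cyclic sequence of oriented $1$-edges $E'_0,\dots,E'_{kd-1}$ (indices mod $kd$) in which each $1$-edge appears exactly once and the terminal point of $E'_j$ is the initial point of $E'_{j+1}$; the $1$-edge in $\gamma^1$ then carries the orientation given by this traversal. $F\colon\gamma^1\to\gamma^0$ is called a $d$-fold cover if $F$ maps succeeding $1$-edges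 of $\gamma^1$ to succeeding $0$-edges of $\gamma^0$; equivalently, if with $m$ the index such that $F(E'_0)=E_m$, one has $F(E'_j)=E_{m+j}$ (indices mod $k$) for all $j=0,\dots,kd-1$. *)

theory Defs
  imports Main
begin

text \<open>Post-critical points p 0, ..., p (k-1) in cyclic order along the oriented curve C;
  the positively oriented 0-edge E i runs from p i to p ((i+1) mod k).\<close>

definition post_set :: "(nat \<Rightarrow> 'p) \<Rightarrow> nat \<Rightarrow> 'p set" where
  "post_set p k = p ` {..<k}"

definition one_vertices :: "('p \<Rightarrow> 'p) \<Rightarrow> (nat \<Rightarrow> 'p) \<Rightarrow> nat \<Rightarrow> 'p set" where
  "one_vertices F p k = F -` post_set p k"

definition edge_structure ::
  "('p \<Rightarrow> 'p) \<Rightarrow> (nat \<Rightarrow> 'p) \<Rightarrow> (nat \<Rightarrow> 'p set) \<Rightarrow> nat \<Rightarrow> 'p set set \<Rightarrow> bool" where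
  "edge_structure F p E k E1 \<longleftrightarrow>
     inj_on p {..<k} \<and>
     (\<forall>i<k. E i \<inter> post_set p k = {p i, p (Suc i mod k)}) \<and>
     finite E1 \<and>
     (\<forall>e\<in>E1. inj_on F e \<and> (\<exists>i<k. F ` e = E i))"

text \<open>An oriented 1-edge (e, a, b): e with initial point a and terminal point b,
  where {a,b} are the two 1-vertices (endpoints) of e.\<close>
definition oriented_one_edge ::
  "('p \<Rightarrow> 'p) \<Rightarrow> (nat \<Rightarrow> 'p) \<Rightarrow> nat \<Rightarrow> 'p set \<times> 'p \<times> 'p \<Rightarrow> bool" where
  "oriented_one_edge F p k x \<longleftrightarrow>
     (case x of (e, a, b) \<Rightarrow> a \<noteq> b \<and> e \<inter> one_vertices F p k = {a, b})"

definition eulerian_circuit ::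
  "('p \<Rightarrow> 'p) \<Rightarrow> (nat \<Rightarrow> 'p) \<Rightarrow> nat \<Rightarrow> 'p set set \<Rightarrow> nat \<Rightarrow> (nat \<Rightarrow> 'p set \<times> 'p \<times> 'p) \<Rightarrow> bool" where
  "eulerian_circuit F p k E1 n c \<longleftrightarrow>
     bij_betw (\<lambda>j. fst (c j)) {..<n} E1 \<and>
     (\<forall>j<n. oriented_one_edge F p k (c j)) \<and>
     (\<forall>j<n. snd (snd (c j)) = fst (snd (c (Suc j mod n))))"

definition positively_oriented ::
  "('p \<Rightarrow> 'p) \<Rightarrow> (nat \<Rightarrow> 'p) \<Rightarrow> (nat \<Rightarrow> 'p set) \<Rightarrow> nat \<Rightarrow> 'p set \<times> 'p \<times> 'p \<Rightarrow> bool" where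
  "positively_oriented F p E k x \<longleftrightarrow>
     (case x of (e, a, b) \<Rightarrow>
        \<exists>i<k. F ` e = E i \<and> F a = p i \<and> F b = p (Suc i mod k))"

text \<open>F : gamma^1 -> gamma^0 is a d-fold cover: succeeding 1-edges are mapped to succeeding
  0-edges (cyclically; n = k d is the length of the circuit).\<close>
definition d_fold_cover ::
  "('p \<Rightarrow> 'p) \<Rightarrow> (nat \<Rightarrow> 'p set) \<Rightarrow> nat \<Rightarrow> nat \<Rightarrow> (nat \<Rightarrow> 'p set \<times> 'p \<times> 'p) \<Rightarrow> bool" where
  "d_fold_cover F E k n c \<longleftrightarrow>
     (\<forall>j<n. \<forall>i<k. F ` fst (c j) = E i \<longrightarrow> F ` fst (c (Suc j mod n)) = E (Suc i mod k))"

end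

theory Submission
  imports Defs
begin

text \<open>A 1-edge over the 0-edge E i has its endpoints mapped onto the two endpoints
  p i, p (i+1) of E i, and i is determined by the 1-edge; so it is positively oriented exactly
  when its terminal point lies over p (i+1). Consecutive 1-edges of a circuit share that
  terminal point. If they lie over E i and E (i+1), the shared point lies over
  {p i, p (i+1)} \<inter> {p (i+1), p (i+2)} = {p (i+1)}, as k \<ge> 3; hence positive orientation.
  Conversely, if every 1-edge is positively oriented, the shared point lies over p (i+1), the
  initial point of E (i+1) only, so the next 1-edge lies over E (i+1).\<close>

lemma Suc_Suc_mod_neq_self:
  fixes i k :: nat
  assumes "3 \<le> k" and "i < k"
  shows "Suc (Suc i mod k) mod k \<noteq> i"
  using assms by (auto simp: mod_Suc)

lemma edge_structure_post_eq_iff: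
  assumes "edge_structure F p E k E1" and "i < k" and "j < k"
  shows "p i = p j \<longleftrightarrow> i = j"
  using assms unfolding edge_structure_def by (auto dest: inj_onD)

lemma edge_structure_index_unique:
  assumes es: "edge_structure F p E k E1" and k: "3 \<le> k"
    and i: "i < k" and i': "i' < k" and "E i = E i'"
  shows "i = i'"
proof -
  have "E i \<inter> post_set p k = {p i, p (Suc i mod k)}"
    and "E i' \<inter> post_set p k = {p i', p (Suc i' mod k)}"
    using es i i' unfolding edge_structure_def by auto
  then have "{p i, p (Suc i mod k)} = {p i', p (Suc i' mod k)}"
    using \<open>E i = E i'\<close> by simp
  then consider "p i = p i'" | "p i = p (Suc i' mod k)" and "p (Suc i mod k) = p i'"
    unfolding doubleton_eq_iff by blast
  then show ?thesis
  proof cases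
    case 1
    then show ?thesis using edge_structure_post_eq_iff[OF es i i'] by simp
  next
    case 2
    then have "i = Suc i' mod k" and "Suc i mod k = i'"
      using edge_structure_post_eq_iff[OF es] i i' by simp_all
    then show ?thesis using Suc_Suc_mod_neq_self[OF k i] by simp
  qed
qed

lemma oriented_one_edge_image_endpoints:
  assumes es: "edge_structure F p E k E1" and "e \<in> E1"
    and "oriented_one_edge F p k (e, a, b)" and "i < k" and "F ` e = E i"
  shows "F a \<in> {p i, p (Suc i mod k)}" and "F b \<in> {p i, p (Suc i mod k)}" and "F a \<noteq> F b"
proof -
  have ab: "a \<noteq> b" "a \<in> e" "b \<in> e" "F a \<in> post_set p k" "F b \<in> post_set p k"
    using assms(3) unfolding oriented_one_edge_def one_vertices_def by auto
  have "E i \<inter> post_set p k = {p i, p (Suc i mod k)}" and "inj_on F e"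
    using es assms(2,4) unfolding edge_structure_def by auto
  then show "F a \<in> {p i, p (Suc i mod k)}" "F b \<in> {p i, p (Suc i mod k)}" "F a \<noteq> F b"
    using ab assms(5) by (auto dest: inj_onD)
qed

lemma positively_oriented_iff_terminal:
  assumes es: "edge_structure F p E k E1" and k: "3 \<le> k" and "e \<in> E1"
    and or: "oriented_one_edge F p k (e, a, b)" and i: "i < k" and Fe: "F ` e = E i"
  shows "positively_oriented F p E k (e, a, b) \<longleftrightarrow> F b = p (Suc i mod k)"
proof
  assume "positively_oriented F p E k (e, a, b)"
  then obtain i' where i': "i' < k" "F ` e = E i'" "F b = p (Suc i' mod k)"
    unfolding positively_oriented_def by auto
  have "i' = i"
    using edge_structure_index_unique[OF es k i'(1) i] i'(2) Fe by simp
  with i' show "F b = p (Suc i mod k)" by simp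
next
  assume Fb: "F b = p (Suc i mod k)"
  have "F a = p i"
    using oriented_one_edge_image_endpoints[OF es assms(3) or i Fe] Fb by auto
  with Fb show "positively_oriented F p E k (e, a, b)"
    unfolding positively_oriented_def using i Fe by auto
qed

lemma eulerian_circuit_step:
  assumes circ: "eulerian_circuit F p k E1 n c" and j: "j < n"
    and cj: "c j = (e, a, b)" and cj': "c (Suc j mod n) = (e', a', b')"
  shows "e \<in> E1" and "oriented_one_edge F p k (e, a, b)"
    and "e' \<in> E1" and "oriented_one_edge F p k (e', a', b')" and "b = a'"
proof -
  have edge: "fst (c l) \<in> E1" and oriented: "oriented_one_edge F p k (c l)" if "l < n" for l
    using circ that unfolding eulerian_circuit_def bij_betw_def by auto
  have "Suc j mod n < n" using j by simp
  then show "e \<in> E1" "oriented_one_edge F p k (e, a, b)"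
    "e' \<in> E1" "oriented_one_edge F p k (e', a', b')"
    using edge oriented j cj cj' by (metis fst_conv)+
  show "b = a'"
    using circ j cj cj' unfolding eulerian_circuit_def by (metis fst_conv snd_conv)
qed

lemma d_fold_cover_imp_positively_oriented:
  assumes es: "edge_structure F p E k E1" and k: "3 \<le> k"
    and circ: "eulerian_circuit F p k E1 n c" and cov: "d_fold_cover F E k n c" and j: "j < n"
  shows "positively_oriented F p E k (c j)"
proof -
  obtain e a b e' a' b' where cj: "c j = (e, a, b)" and cj': "c (Suc j mod n) = (e', a', b')"
    by (metis prod.exhaust)
  note step = eulerian_circuit_step[OF circ j cj cj']
  obtain i where i: "i < k" "F ` e = E i"
    using es step(1) unfolding edge_structure_def by auto
  have "F ` fst (c (Suc j mod n)) = E (Suc i mod k)"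
    using cov j i cj unfolding d_fold_cover_def by (metis fst_conv)
  then have i': "Suc i mod k < k" "F ` e' = E (Suc i mod k)"
    using i(1) cj' by simp_all
  have "F b \<in> {p i, p (Suc i mod k)}"
    using oriented_one_edge_image_endpoints[OF es step(1,2) i] by simp
  moreover have "F b \<in> {p (Suc i mod k), p (Suc (Suc i mod k) mod k)}"
    using oriented_one_edge_image_endpoints[OF es step(3,4) i'] step(5) by simp
  moreover have "p i \<noteq> p (Suc (Suc i mod k) mod k)"
    using edge_structure_post_eq_iff[OF es i(1)] Suc_Suc_mod_neq_self[OF k i(1)] i(1) by simp
  ultimately have "F b = p (Suc i mod k)" by auto
  then show ?thesis
    using positively_oriented_iff_terminal[OF es k step(1,2) i] cj by simp
qed

lemma positively_oriented_imp_d_fold_cover: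
  assumes es: "edge_structure F p E k E1" and k: "3 \<le> k"
    and circ: "eulerian_circuit F p k E1 n c"
    and pos: "\<forall>j<n. positively_oriented F p E k (c j)"
  shows "d_fold_cover F E k n c"
  unfolding d_fold_cover_def
proof (intro allI impI)
  fix j i assume j: "j < n" and i: "i < k" and Fe: "F ` fst (c j) = E i"
  obtain e a b e' a' b' where cj: "c j = (e, a, b)" and cj': "c (Suc j mod n) = (e', a', b')"
    by (metis prod.exhaust)
  note step = eulerian_circuit_step[OF circ j cj cj']
  have "Suc j mod n < n"
    using j by simp
  then have pos_j: "positively_oriented F p E k (e, a, b)"
    and pos_Suc_j: "positively_oriented F p E k (e', a', b')"
    using pos j cj cj' by (metis, metis)
  have Fb: "F b = p (Suc i mod k)"
    using positively_oriented_iff_terminal[OF es k step(1,2) i] pos_j Fe cj by simp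
  obtain i' where i': "i' < k" "F ` e' = E i'" "F a' = p i'"
    using pos_Suc_j unfolding positively_oriented_def by auto
  have "i' = Suc i mod k"
    using edge_structure_post_eq_iff[OF es i'(1)] i step(5) i'(3) Fb by simp
  with i' cj' show "F ` fst (c (Suc j mod n)) = E (Suc i mod k)" by simp
qed

theorem lemma3p6:
  fixes F :: "'p \<Rightarrow> 'p" and p :: "nat \<Rightarrow> 'p" and E :: "nat \<Rightarrow> 'p set"
    and E1 :: "'p set set" and k d :: nat and c :: "nat \<Rightarrow> 'p set \<times> 'p \<times> 'p"
  assumes "3 \<le> k" and "2 \<le> d"
    and "edge_structure F p E k E1"
    and "card E1 = k * d"
    and "eulerian_circuit F p k E1 (k * d) c"
  shows "d_fold_cover F E k (k * d) c \<longleftrightarrow> (\<forall>j<k * d. positively_oriented F p E k (c j))"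
  using d_fold_cover_imp_positively_oriented[OF assms(3,1,5)]
    positively_oriented_imp_d_fold_cover[OF assms(3,1,5)] by blast

end
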